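(* Let $(\vdash,\overline{\cdot},\widehat{\cdot})$ be a setting and let $\vdash^{\emptyset}$ be the restriction of $\vdash$ to those pairs $(\Gamma,\gamma)$ for which there is no $(\emptyset,\delta)\in{\vdash}$ with $\delta\in\overline{\psi}$ for some $\psi\in\widehat{\Gamma}$. Then for $\mathsf{Sem}\in\{\mathsf{Grd},\mathsf{Prf}\}$, every $\mathcal{S}\subseteq\mathcal{L}$ and every $\phi$: $\mathcal{S}\mathrel{\mid\!\sim}^{(\vdash,\overline{\cdot},\widehat{\cdot})}_{\mathsf{Sem}}\phi$ iff $\mathcal{S}\mathrel{\mid\!\sim}^{(\vdash^{\emptyset},\overline{\cdot},\widehat{\cdot})}_{\mathsf{Sem}}\phi$.
   Context: $\mathcal{L}$ is a set of formulas; $\wp_{\sf fin}(X)$ is the set of finite subsets of $X$. A setting is a triple $(\vdash,\overline{\cdot},\widehat{\cdot})$ with ${\vdash}\subseteq\wp_{\sf fin}(\mathcal{L})\times\mathcal{L}$ arbitrary, $\overline{\cdot}:\mathcal{L}\to\wp(\mathcal{L})$, and $\widehat{\cdot}$ assigning to each nonempty finite set of formulas a finite set of formulas, with $\widehat{\emptyset}=\emptyset$ (so arguments with empty support have no attackers). For $\mathcal{S}\subseteq\mathcal{L}$, $\mathit{Arg}_{\vdash}(\mathcal{S})=\{(\Gamma,\gamma):\Gamma\subseteq\mathcal{S}\text{ finite},\Gamma\vdash\gamma\}$; $\mathsf{Conc}((\Gamma,\gamma))=\gamma$. In $\mathcal{AF}_{\vdash}(\mathcal{S})$, $(\Gamma,\gamma)$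 attacks $(\Gamma',\gamma')$ iff $\gamma\in\overline{\phi}$ for some $\phi\in\widehat{\Gamma'}$. Dung semantics on $\mathit{Arg}_{\vdash}(\mathcal{S})$: conflict-free, defends (every attacker is attacked by a member), admissible (conflict-free and defends its members), complete (admissible and contains all it defends), preferred ($\subseteq$-maximal complete), grounded ($\subseteq$-minimal complete). $\mathcal{S}\mathrel{\mid\!\sim}^{\mathcal{AF}}_{\mathsf{Sem}}\phi$ iff every $\mathsf{Sem}$-extension of $\mathcal{AF}(\mathcal{S})$ contains an argument with conclusion $\phi$. *)

theory Defs
  imports Main
begin

definition conflict_free :: "('a \<Rightarrow> 'a \<Rightarrow> bool) \<Rightarrow> 'a set \<Rightarrow> bool" where
  "conflict_free att E \<longleftrightarrow> (\<forall>a\<in>E. \<forall>b\<in>E. \<not> att a b)"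

definition defends :: "'a set \<Rightarrow> ('a \<Rightarrow> 'a \<Rightarrow> bool) \<Rightarrow> 'a set \<Rightarrow> 'a \<Rightarrow> bool" where
  "defends A att E a \<longleftrightarrow> (\<forall>b\<in>A. att b a \<longrightarrow> (\<exists>c\<in>E. att c b))"

definition admissible :: "'a set \<Rightarrow> ('a \<Rightarrow> 'a \<Rightarrow> bool) \<Rightarrow> 'a set \<Rightarrow> bool" where
  "admissible A att E \<longleftrightarrow> E \<subseteq> A \<and> conflict_free att E \<and> (\<forall>a\<in>E. defends A att E a)"

definition complete_ext :: "'a set \<Rightarrow> ('a \<Rightarrow> 'a \<Rightarrow> bool) \<Rightarrow> 'a set \<Rightarrow> bool" where
  "complete_ext A att E \<longleftrightarrow> admissible A att E \<and> (\<forall>a\<in>A. defends A att E a \<longrightarrow> a \<in> E)"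

definition preferred_ext :: "'a set \<Rightarrow> ('a \<Rightarrow> 'a \<Rightarrow> bool) \<Rightarrow> 'a set \<Rightarrow> bool" where
  "preferred_ext A att E \<longleftrightarrow> complete_ext A att E \<and>
     (\<forall>E'. complete_ext A att E' \<and> E \<subseteq> E' \<longrightarrow> E' = E)"

definition grounded_ext :: "'a set \<Rightarrow> ('a \<Rightarrow> 'a \<Rightarrow> bool) \<Rightarrow> 'a set \<Rightarrow> bool" where
  "grounded_ext A att E \<longleftrightarrow> complete_ext A att E \<and>
     (\<forall>E'. complete_ext A att E' \<and> E' \<subseteq> E \<longrightarrow> E' = E)"

datatype semantics = Grd | Prf

definition sem_ext :: "semantics \<Rightarrow> 'a set \<Rightarrow> ('a \<Rightarrow> 'a \<Rightarrow> bool) \<Rightarrow> 'a set \<Rightarrow> bool" where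
  "sem_ext s = (case s of Grd \<Rightarrow> grounded_ext | Prf \<Rightarrow> preferred_ext)"

(* A setting over formulas of type 'f:
   der \<Gamma> \<gamma>  : \<Gamma> \<turnstile> \<gamma>  (only consulted for finite \<Gamma>)
   ctr \<phi>    : \<overline>{\<phi>}
   hat \<Gamma>    : \<widehat>{\<Gamma>} *)
type_synonym 'f arg = "'f set \<times> 'f"

definition setting :: "('f set \<Rightarrow> 'f \<Rightarrow> bool) \<Rightarrow> ('f \<Rightarrow> 'f set) \<Rightarrow> ('f set \<Rightarrow> 'f set) \<Rightarrow> bool" where
  "setting der ctr hat \<longleftrightarrow> hat {} = {} \<and> (\<forall>\<Gamma>. finite \<Gamma> \<longrightarrow> finite (hat \<Gamma>))"

definition Arg :: "('f set \<Rightarrow> 'f \<Rightarrow> bool) \<Rightarrow> 'f set \<Rightarrow> 'f arg set" where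
  "Arg der S = {(\<Gamma>, \<gamma>). finite \<Gamma> \<and> \<Gamma> \<subseteq> S \<and> der \<Gamma> \<gamma>}"

definition attacks :: "('f \<Rightarrow> 'f set) \<Rightarrow> ('f set \<Rightarrow> 'f set) \<Rightarrow> 'f arg \<Rightarrow> 'f arg \<Rightarrow> bool" where
  "attacks ctr hat a b \<longleftrightarrow> (\<exists>\<phi>\<in>hat (fst b). snd a \<in> ctr \<phi>)"

definition nm_entails ::
  "('f set \<Rightarrow> 'f \<Rightarrow> bool) \<Rightarrow> ('f \<Rightarrow> 'f set) \<Rightarrow> ('f set \<Rightarrow> 'f set) \<Rightarrow> semantics \<Rightarrow> 'f set \<Rightarrow> 'f \<Rightarrow> bool" where
  "nm_entails der ctr hat s S \<phi> \<longleftrightarrow>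
     (\<forall>E. sem_ext s (Arg der S) (attacks ctr hat) E \<longrightarrow> (\<exists>a\<in>E. snd a = \<phi>))"

definition der_empty :: "('f set \<Rightarrow> 'f \<Rightarrow> bool) \<Rightarrow> ('f \<Rightarrow> 'f set) \<Rightarrow> ('f set \<Rightarrow> 'f set) \<Rightarrow> 'f set \<Rightarrow> 'f \<Rightarrow> bool" where
  "der_empty der ctr hat \<Gamma> \<gamma> \<longleftrightarrow> der \<Gamma> \<gamma> \<and> \<not> (\<exists>\<delta>. der {} \<delta> \<and> (\<exists>\<psi>\<in>hat \<Gamma>. \<delta> \<in> ctr \<psi>))"

end

theory Submission
  imports Defs
begin

text \<open>
  Arguments with empty support are never attacked, so every complete extension contains all of
  them; by conflict-freeness it then contains no argument they attack, and such arguments need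
  no defence because the extension already attacks them. Hence deleting the arguments attacked
  by unattacked ones does not change the complete extensions of an argumentation framework, and
  grounded and preferred extensions, being defined from the complete ones, do not change either.
  Passing from \<open>\<turnstile>\<close> to \<open>\<turnstile>\<^sup>\<emptyset>\<close> is exactly such a deletion.
\<close>

lemma complete_ext_contains_unattacked:
  assumes "complete_ext A att E" and "u \<in> A" and "\<And>b. b \<in> A \<Longrightarrow> \<not> att b u"
  shows "u \<in> E"
  using assms by (auto simp: complete_ext_def defends_def)

lemma defends_restrict:
  assumes "B \<subseteq> A" and "\<And>b. b \<in> A - B \<Longrightarrow> \<exists>c\<in>E. att c b"
  shows "defends A att E a \<longleftrightarrow> defends B att E a"
  using assms unfolding defends_def by blast

lemma complete_ext_remove_attacked_by_unattacked:
  assumes U_sub: "U \<subseteq> A" and U_unattacked: "\<And>u b. u \<in> U \<Longrightarrow> b \<in> A \<Longrightarrow> \<not> att b u"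
  defines "B \<equiv> {a \<in> A. \<forall>u\<in>U. \<not> att u a}"
  shows "complete_ext A att E \<longleftrightarrow> complete_ext B att E"
proof -
  have "B \<subseteq> A" and "U \<subseteq> B"
    using U_sub U_unattacked by (auto simp: B_def)
  have U_in: "U \<subseteq> E" if "complete_ext C att E" "U \<subseteq> C" "C \<subseteq> A" for C
    using that complete_ext_contains_unattacked[OF that(1)] U_unattacked by blast
  have defends_iff: "defends A att E a \<longleftrightarrow> defends B att E a" if "U \<subseteq> E" for a
    using that \<open>B \<subseteq> A\<close> by (intro defends_restrict) (auto simp: B_def)
  show ?thesis
  proof
    assume compl: "complete_ext A att E"
    then have "U \<subseteq> E" using U_in U_sub by blast
    have "E \<subseteq> B"
    proof
      fix a assume "a \<in> E"
      with compl have "a \<in> A" and "\<forall>u\<in>E. \<not> att u a"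
        by (auto simp: complete_ext_def admissible_def conflict_free_def)
      with \<open>U \<subseteq> E\<close> show "a \<in> B" by (auto simp: B_def)
    qed
    then show "complete_ext B att E"
      using compl \<open>B \<subseteq> A\<close> defends_iff[OF \<open>U \<subseteq> E\<close>]
      by (auto simp: complete_ext_def admissible_def)
  next
    assume compl: "complete_ext B att E"
    then have "U \<subseteq> E" using U_in \<open>U \<subseteq> B\<close> \<open>B \<subseteq> A\<close> by blast
    have "a \<in> B" if "a \<in> A" and defended: "defends A att E a" for a
    proof (rule ccontr)
      assume "a \<notin> B"
      then obtain u where "u \<in> U" "att u a" using \<open>a \<in> A\<close> by (auto simp: B_def)
      with defended U_sub obtain c where "c \<in> E" "att c u" by (auto simp: defends_def)
      moreover have "E \<subseteq> A" using compl \<open>B \<subseteq> A\<close> by (auto simp: complete_ext_def admissible_def)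
      ultimately show False using U_unattacked \<open>u \<in> U\<close> by blast
    qed
    then show "complete_ext A att E"
      using compl \<open>B \<subseteq> A\<close> defends_iff[OF \<open>U \<subseteq> E\<close>]
      by (auto simp: complete_ext_def admissible_def)
  qed
qed

lemma sem_ext_cong_complete_ext:
  assumes "\<And>E. complete_ext A att E \<longleftrightarrow> complete_ext B att E"
  shows "sem_ext s A att E \<longleftrightarrow> sem_ext s B att E"
  using assms by (cases s) (simp_all add: sem_ext_def grounded_ext_def preferred_ext_def)

lemma Arg_der_empty:
  "Arg (der_empty der ctr hat) S =
     {a \<in> Arg der S. \<forall>u\<in>{({}, \<delta>) | \<delta>. der {} \<delta>}. \<not> attacks ctr hat u a}"
  by (auto simp: Arg_def der_empty_def attacks_def)

lemma empty_support_in_Arg: "der {} \<delta> \<Longrightarrow> ({}, \<delta>) \<in> Arg der S"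
  by (simp add: Arg_def)

lemma not_attacks_empty_support: "hat {} = {} \<Longrightarrow> \<not> attacks ctr hat b ({}, \<delta>)"
  by (simp add: attacks_def)

theorem lemma1:
  fixes der :: "'f set \<Rightarrow> 'f \<Rightarrow> bool" and ctr :: "'f \<Rightarrow> 'f set" and hat :: "'f set \<Rightarrow> 'f set"
  assumes "setting der ctr hat"
  shows "nm_entails der ctr hat s S \<phi> \<longleftrightarrow> nm_entails (der_empty der ctr hat) ctr hat s S \<phi>"
proof -
  have "hat {} = {}" using assms by (simp add: setting_def)
  then have "complete_ext (Arg der S) (attacks ctr hat) E \<longleftrightarrow>
             complete_ext (Arg (der_empty der ctr hat) S) (attacks ctr hat) E" for E
    unfolding Arg_der_empty
    by (intro complete_ext_remove_attacked_by_unattacked) (auto simp: empty_support_in_Arg not_attacks_empty_support)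
  then have "sem_ext s (Arg der S) (attacks ctr hat) E \<longleftrightarrow>
             sem_ext s (Arg (der_empty der ctr hat) S) (attacks ctr hat) E" for E
    by (rule sem_ext_cong_complete_ext)
  then show ?thesis
    by (simp add: nm_entails_def)
qed

end
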